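(* Let $m,n\ge 0$ and $k=m+n+1$. Let $f\colon X\to Y$ be a large scale uniform function of metric spaces with coarseness control function $c_f$, and suppose $\operatorname{asdim}(Y)\le n$. If $f$ admits an $(m,k)$-dimensional control function $D_f$, then $\operatorname{asdim}(X)\le m+n$. Moreover, if $c_f$, some $n$-dimensional control function of $Y$, and $D_f$ can all be chosen linear (respectively, all dilations), then $X$ has a $(k-1)$-dimensional control function that is linear (respectively, a dilation).
   Context: For a metric space $X$ and $r>0$, an $r$-chain is a finite sequence $x_1,\dots,x_j$ with $d(x_i,x_{i+1})\le r$; the $r$-components of $A\subset X$ are the equivalence classes of points of $A$ under "joined by an $r$-chain lying in $A$". A set is $R$-bounded if its diameter is $\le R$. A family is $r$-disjoint if points in different members are at distance $\ge r$. An $n$-dimensional control function of $X$ is $D_X\colon\mathbb R_+\to\mathbb R_+$ such that for every $r>0$ there are $r$-disjoint families $\mathcal U_1,\dots,\mathcal U_{n+1}$ with members of diameter $\le D_X(r)$ whose union covers $X$; $\operatorname{asdim}(X)\le n$ iff such a function exists. $f\colon X\to Y$ is large scale uniform with coarseness control function $c_f\colon\mathbb R_+\to\mathbb R_+$ if $d_X(x,y)\le r\Rightarrow d_Y(f(x),f(y))\le c_f(r)$. Given $k\ge m+1\ge1$, an $(m,k)$-dimensional control function of $f$ is $D_f\colon\mathbb R_+\times\mathbb R_+\to\mathbb R_+$ such that for all $r_X,R_Y>0$ every $A\subset X$ with $\operatorname{diam} f(A)\le R_Y$ can be written as $A=A_1\cup\dots\cup A_k$ where the $r_X$-components of each $A_i$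 are $D_f(r_X,R_Y)$-bounded and every $x\in A$ belongs to at least $k-m$ of the sets $A_i$. A one-variable function is linear if of the form $r\mapsto cr+b$ ($b,c\ge0$), a dilation if of the form $r\mapsto cr$ ($c>0$); a two-variable function is linear if of the form $(r,R)\mapsto ar+bR+c$ and a dilation if of the form $(r,R)\mapsto ar+bR$. *)

theory Defs
  imports "HOL-Analysis.Analysis"
begin

definition R_bounded :: "'a::metric_space set \<Rightarrow> real \<Rightarrow> bool" where
  "R_bounded S R \<longleftrightarrow> (\<forall>x\<in>S. \<forall>y\<in>S. dist x y \<le> R)"

definition r_chain_in :: "'a::metric_space set \<Rightarrow> real \<Rightarrow> 'a list \<Rightarrow> bool" where
  "r_chain_in A r xs \<longleftrightarrow> xs \<noteq> [] \<and> set xs \<subseteq> A \<and>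
     (\<forall>i. Suc i < length xs \<longrightarrow> dist (xs ! i) (xs ! Suc i) \<le> r)"

definition r_joined :: "'a::metric_space set \<Rightarrow> real \<Rightarrow> 'a \<Rightarrow> 'a \<Rightarrow> bool" where
  "r_joined A r x y \<longleftrightarrow> (\<exists>xs. r_chain_in A r xs \<and> hd xs = x \<and> last xs = y)"

definition r_component :: "'a::metric_space set \<Rightarrow> real \<Rightarrow> 'a \<Rightarrow> 'a set" where
  "r_component A r x = {y \<in> A. r_joined A r x y}"

definition r_components :: "'a::metric_space set \<Rightarrow> real \<Rightarrow> 'a set set" where
  "r_components A r = r_component A r ` A"

definition r_disjoint :: "'a::metric_space set set \<Rightarrow> real \<Rightarrow> bool" where
  "r_disjoint \<U> r \<longleftrightarrow> (\<forall>U\<in>\<U>. \<forall>V\<in>\<U>. U \<noteq> V \<longrightarrow> (\<forall>x\<in>U. \<forall>y\<in>V. r \<le> dist x y))"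

definition dim_control_function :: "'a::metric_space set \<Rightarrow> nat \<Rightarrow> (real \<Rightarrow> real) \<Rightarrow> bool" where
  "dim_control_function X n D \<longleftrightarrow>
     (\<forall>r>0. 0 \<le> D r) \<and>
     (\<forall>r>0. \<exists>\<U> :: nat \<Rightarrow> 'a set set.
        (\<forall>i<Suc n. r_disjoint (\<U> i) r \<and> (\<forall>U\<in>\<U> i. U \<subseteq> X \<and> R_bounded U (D r))) \<and>
        X \<subseteq> (\<Union>i<Suc n. \<Union>(\<U> i)))"

definition asdim_le :: "'a::metric_space set \<Rightarrow> nat \<Rightarrow> bool" where
  "asdim_le X n \<longleftrightarrow> (\<exists>D. dim_control_function X n D)"

definition large_scale_uniform ::
  "('a::metric_space \<Rightarrow> 'b::metric_space) \<Rightarrow> (real \<Rightarrow> real) \<Rightarrow> bool" where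
  "large_scale_uniform f c \<longleftrightarrow> (\<forall>r>0. 0 \<le> c r) \<and>
     (\<forall>r>0. \<forall>x y. dist x y \<le> r \<longrightarrow> dist (f x) (f y) \<le> c r)"

definition map_control_function ::
  "('a::metric_space \<Rightarrow> 'b::metric_space) \<Rightarrow> nat \<Rightarrow> nat \<Rightarrow> (real \<Rightarrow> real \<Rightarrow> real) \<Rightarrow> bool" where
  "map_control_function f m k D \<longleftrightarrow>
     (\<forall>r>0. \<forall>R>0. 0 \<le> D r R) \<and>
     (\<forall>r>0. \<forall>R>0. \<forall>A. R_bounded (f ` A) R \<longrightarrow>
        (\<exists>As :: nat \<Rightarrow> 'a set.
           A = (\<Union>i<k. As i) \<and>
           (\<forall>i<k. \<forall>C\<in>r_components (As i) r. R_bounded C (D r R)) \<and>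
           (\<forall>x\<in>A. k - m \<le> card {i. i < k \<and> x \<in> As i})))"

definition linear_fun1 :: "(real \<Rightarrow> real) \<Rightarrow> bool" where
  "linear_fun1 D \<longleftrightarrow> (\<exists>c b. 0 \<le> b \<and> 0 \<le> c \<and> (\<forall>r>0. D r = c * r + b))"

definition dilation_fun1 :: "(real \<Rightarrow> real) \<Rightarrow> bool" where
  "dilation_fun1 D \<longleftrightarrow> (\<exists>c>0. \<forall>r>0. D r = c * r)"

definition linear_fun2 :: "(real \<Rightarrow> real \<Rightarrow> real) \<Rightarrow> bool" where
  "linear_fun2 D \<longleftrightarrow> (\<exists>a b c. 0 \<le> a \<and> 0 \<le> b \<and> 0 \<le> c \<and>
      (\<forall>r>0. \<forall>R>0. D r R = a * r + b * R + c))"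

definition dilation_fun2 :: "(real \<Rightarrow> real \<Rightarrow> real) \<Rightarrow> bool" where
  "dilation_fun2 D \<longleftrightarrow> (\<exists>a b. 0 \<le> a \<and> 0 \<le> b \<and> (\<forall>r>0. \<forall>R>0. D r R = a * r + b * R))"

end

theory Submission
  imports Defs
begin

text \<open>Fix r > 0 and cover Y by n + 1 families, each S-disjoint for a separation S that is large
  compared with the image c_f(r) of an r-step. Build k = m + n + 1 colour classes of X in n + 1
  stages. At stage s the preimage of each member V of the s-th family is split by the
  (m,k)-control function into k pieces; colour c receives the c-th pieces and loses its old points
  lying in a thin shell around the family, at a radius depending on c. An r-chain cannot jump over
  a shell, so a new r-component of colour c either lies in an old one or stays close to a single
  piece, and the diameter bounds obey B(s+1) = D_f(B(s) + 2r, R) + 2 B(s) + 2r, where R bounds the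
  diameters of the members of the families. Shells of distinct colours are disjoint, so a point
  loses at most one colour per stage, while a point of the preimage of the s-th family gains at
  least k - m = n + 1 colours at stage s; hence every point keeps a colour after the last stage.
  The r-components of the k colour classes are the required m + n + 1 families, and B(n+1) is
  built from c_f, D_Y and D_f by sums, nonnegative multiples and compositions, so it is linear, or
  a dilation, when they are.\<close>

section \<open>r-chains and r-components\<close>

definition r_step :: "'a::metric_space set \<Rightarrow> real \<Rightarrow> 'a \<Rightarrow> 'a \<Rightarrow> bool" where
  "r_step A r p q \<longleftrightarrow> p \<in> A \<and> q \<in> A \<and> dist p q \<le> r"

lemma symp_r_step: "symp (r_step A r)"
  by (auto intro: sympI simp: r_step_def dist_commute)

lemma r_chain_in_Cons_Cons:
  "r_chain_in A r (a # b # xs) \<longleftrightarrow> a \<in> A \<and> dist a b \<le> r \<and> r_chain_in A r (b # xs)"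
  unfolding r_chain_in_def
  by (auto simp: All_less_Suc2 [where n = "length xs", simplified] less_Suc_eq_0_disj)

lemma r_chain_in_rtranclp: "r_chain_in A r xs \<Longrightarrow> (r_step A r)\<^sup>*\<^sup>* (hd xs) (last xs)"
proof (induction xs rule: induct_list012)
  case (3 a b xs)
  then have "r_chain_in A r (b # xs)" "r_step A r a b"
    by (auto simp: r_chain_in_Cons_Cons r_step_def r_chain_in_def)
  with "3.IH"(2) show ?case
    by (auto intro: converse_rtranclp_into_rtranclp)
qed (auto simp: r_chain_in_def)

lemma rtranclp_r_chain_in:
  assumes "(r_step A r)\<^sup>*\<^sup>* x y" "x \<in> A"
  shows "\<exists>xs. r_chain_in A r xs \<and> hd xs = x \<and> last xs = y"
  using assms
proof (induction rule: converse_rtranclp_induct)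
  case base
  then show ?case
    by (intro exI [of _ "[y]"]) (simp add: r_chain_in_def)
next
  case (step x z)
  then obtain zs where "r_chain_in A r (z # zs)" "last (z # zs) = y"
    by (auto simp: r_step_def r_chain_in_def neq_Nil_conv)
  with step.hyps(1) show ?case
    by (intro exI [of _ "x # z # zs"]) (auto simp: r_chain_in_Cons_Cons r_step_def)
qed

lemma r_joined_iff_rtranclp: "r_joined A r x y \<longleftrightarrow> x \<in> A \<and> (r_step A r)\<^sup>*\<^sup>* x y"
  unfolding r_joined_def
  by (metis hd_in_set r_chain_in_def r_chain_in_rtranclp rtranclp_r_chain_in subsetD)

lemma r_joined_in: "r_joined A r x y \<Longrightarrow> x \<in> A \<and> y \<in> A"
  by (metis r_joined_iff_rtranclp r_step_def rtranclp.cases)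

lemma r_joined_refl: "x \<in> A \<Longrightarrow> r_joined A r x x"
  by (simp add: r_joined_iff_rtranclp)

lemma r_joined_snoc: "r_joined A r x y \<Longrightarrow> z \<in> A \<Longrightarrow> dist y z \<le> r \<Longrightarrow> r_joined A r x z"
  using r_joined_in [of A r x y]
  by (auto simp: r_joined_iff_rtranclp r_step_def intro: rtranclp.rtrancl_into_rtrancl)

lemma r_joined_trans: "r_joined A r x y \<Longrightarrow> r_joined A r y z \<Longrightarrow> r_joined A r x z"
  by (auto simp: r_joined_iff_rtranclp)

lemma r_joined_sym: "r_joined A r x y \<Longrightarrow> r_joined A r y x"
  using r_joined_in [of A r x y] sympD [OF symp_rtranclp [OF symp_r_step]]
  by (auto simp: r_joined_iff_rtranclp)

lemma r_joined_induct [consumes 1, case_names base step]: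
  assumes "r_joined A r x y" "P x"
    and "\<And>p q. P p \<Longrightarrow> p \<in> A \<Longrightarrow> q \<in> A \<Longrightarrow> dist p q \<le> r \<Longrightarrow> P q"
  shows "P y"
proof -
  have "(r_step A r)\<^sup>*\<^sup>* x y"
    using assms(1) by (simp add: r_joined_iff_rtranclp)
  then show ?thesis
    by (induction rule: rtranclp_induct) (auto simp: r_step_def assms(2,3))
qed

lemma r_component_iff: "y \<in> r_component A r x \<longleftrightarrow> y \<in> A \<and> r_joined A r x y"
  by (simp add: r_component_def)

lemma r_component_self: "x \<in> A \<Longrightarrow> x \<in> r_component A r x"
  by (simp add: r_component_iff r_joined_refl)

lemma r_component_joined:
  "y \<in> r_component A r x \<Longrightarrow> z \<in> r_component A r x \<Longrightarrow> r_joined A r y z"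
  by (meson r_component_iff r_joined_sym r_joined_trans)

lemma r_component_eq:
  "y \<in> r_component A r x \<Longrightarrow> y \<in> r_component A r x' \<Longrightarrow> r_component A r x = r_component A r x'"
  unfolding r_component_def using r_joined_sym r_joined_trans by blast

lemma r_component_extend:
  "u \<in> r_component A r x \<Longrightarrow> y \<in> A \<Longrightarrow> dist u y \<le> r \<Longrightarrow> y \<in> r_component A r x"
  by (auto simp: r_component_iff intro: r_joined_snoc)

lemma r_disjoint_r_components: "r_disjoint (r_components A r) r"
  unfolding r_disjoint_def r_components_def
proof (clarify, rule ccontr)
  fix x x' y y'
  assume y: "y \<in> r_component A r x" and y': "y' \<in> r_component A r x'"
    and ne: "r_component A r x \<noteq> r_component A r x'" and close: "\<not> r \<le> dist y y'"
  have "y' \<in> r_component A r x"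
    using r_component_extend [OF y] y' close by (simp add: r_component_iff)
  then show False
    using r_component_eq y' ne by blast
qed

lemma r_joined_dist_le:
  assumes "\<forall>C\<in>r_components A r. R_bounded C B" "r_joined A r x y"
  shows "dist x y \<le> B"
proof -
  have "x \<in> A"
    using r_joined_in [OF assms(2)] by simp
  then have "R_bounded (r_component A r x) B"
    using assms(1) by (simp add: r_components_def)
  moreover have "x \<in> r_component A r x" "y \<in> r_component A r x"
    using \<open>x \<in> A\<close> assms(2) r_joined_in [OF assms(2)] by (auto simp: r_component_iff r_joined_refl)
  ultimately show ?thesis
    unfolding R_bounded_def by blast
qed

lemma r_joined_within_component:
  assumes "r_joined A r x y" "r_component A r x \<subseteq> A'"
  shows "r_joined A' r x y"
proof -
  have "y \<in> r_component A r x \<and> r_joined A' r x y"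
    using assms(1)
  proof (induction rule: r_joined_induct)
    case base
    have "x \<in> r_component A r x"
      using r_joined_in [OF assms(1)] by (simp add: r_component_self)
    then show ?case
      using assms(2) by (auto intro: r_joined_refl)
  next
    case (step p q)
    then have "q \<in> r_component A r x"
      by (auto simp: r_component_iff intro: r_joined_snoc)
    then show ?case
      using step assms(2) by (auto intro: r_joined_snoc)
  qed
  then show ?thesis ..
qed

section \<open>Shells around a disjoint family\<close>

definition nbhd :: "'a::metric_space set \<Rightarrow> real \<Rightarrow> 'a set" where
  "nbhd V \<epsilon> = {y. \<exists>v\<in>V. dist y v < \<epsilon>}"

definition shell :: "('a \<Rightarrow> 'b::metric_space) \<Rightarrow> 'b set set \<Rightarrow> real \<Rightarrow> real \<Rightarrow> 'a set" where
  "shell f \<V> a b = (\<Union>V\<in>\<V>. f -` (nbhd V b - nbhd V a))"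

lemma nbhd_mono: "a \<le> b \<Longrightarrow> nbhd V a \<subseteq> nbhd V b"
  unfolding nbhd_def by (auto intro: less_le_trans)

lemma nbhd_self: "y \<in> V \<Longrightarrow> 0 < \<epsilon> \<Longrightarrow> y \<in> nbhd V \<epsilon>"
  by (force simp: nbhd_def)

lemma nbhd_triangle: "y \<in> nbhd V a \<Longrightarrow> dist z y \<le> e \<Longrightarrow> z \<in> nbhd V (a + e)"
  unfolding nbhd_def by (smt (verit) dist_triangle mem_Collect_eq)

lemma r_disjoint_eq:
  "r_disjoint \<V> S \<Longrightarrow> V \<in> \<V> \<Longrightarrow> V' \<in> \<V> \<Longrightarrow> v \<in> V \<Longrightarrow> v' \<in> V' \<Longrightarrow> dist v v' < S \<Longrightarrow> V = V'"
  unfolding r_disjoint_def by force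

lemma r_disjoint_nbhd_eq:
  assumes "r_disjoint \<V> S" "V \<in> \<V>" "V' \<in> \<V>" "y \<in> nbhd V a" "y \<in> nbhd V' b" "a + b \<le> S"
  shows "V = V'"
proof -
  obtain v v' where "v \<in> V" "v' \<in> V'" "dist y v < a" "dist y v' < b"
    using assms(4,5) by (auto simp: nbhd_def)
  moreover have "dist v v' \<le> dist y v + dist y v'"
    by (metis dist_commute dist_triangle)
  ultimately show ?thesis
    using r_disjoint_eq [OF assms(1-3)] assms(6) by fastforce
qed

text \<open>A point in both shells is within b of one member and within b' of another, so these
  coincide by S-disjointness; around a single member the second shell starts where the first one
  ends.\<close>

lemma shells_disjoint:
  assumes "r_disjoint \<V> S" "b \<le> a'" "b + b' \<le> S"
  shows "shell f \<V> a b \<inter> shell f \<V> a' b' = {}"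
proof -
  have False if "V \<in> \<V>" "V' \<in> \<V>" "y \<in> nbhd V b" "y \<in> nbhd V' b'" "y \<notin> nbhd V' a'" for V V' y
  proof -
    have "V = V'"
      using r_disjoint_nbhd_eq [OF assms(1) that(1-4) assms(3)] .
    then show False
      using that(3,5) nbhd_mono [OF assms(2)] by blast
  qed
  then show ?thesis
    unfolding shell_def by blast
qed

section \<open>One stage of the construction\<close>

text \<open>L is one colour built so far, with B-bounded r-components, and G V are the new pieces over
  the members V of the S-disjoint family \<V>, with D-bounded \<rho>-components.\<close>

locale shell_step =
  fixes f :: "'a::metric_space \<Rightarrow> 'b::metric_space"
    and \<V> :: "'b set set" and G :: "'b set \<Rightarrow> 'a set" and L :: "'a set"
    and r cr w \<beta> S \<rho> B D :: real
  assumes uniform: "\<And>x x'. dist x x' \<le> r \<Longrightarrow> dist (f x) (f x') \<le> cr"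
    and cr_less_w: "cr < w" and w_le_\<beta>: "w \<le> \<beta>" and S_ge: "2 * (\<beta> + w) \<le> S"
    and \<V>_disjoint: "r_disjoint \<V> S"
    and G_sub: "\<And>V. V \<in> \<V> \<Longrightarrow> f ` G V \<subseteq> V"
    and G_bounded: "\<And>V. V \<in> \<V> \<Longrightarrow> \<forall>C\<in>r_components (G V) \<rho>. R_bounded C D"
    and L_bounded: "\<forall>C\<in>r_components L r. R_bounded C B"
    and \<rho>_ge: "B + 2 * r \<le> \<rho>"
    and nonneg: "0 \<le> r" "0 \<le> B" "0 \<le> D"
begin

abbreviation "U \<equiv> \<Union>V\<in>\<V>. G V"

abbreviation "merged \<equiv> U \<union> (L - shell f \<V> \<beta> (\<beta> + w))"

lemma w_pos: "0 < w"
  using uniform [of undefined undefined] nonneg(1) cr_less_w by simp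

text \<open>The invariant of r-chains in the merged set starting at a point u0 of a piece G V0: inside U
  they stay in the \<rho>-component of u0, outside U they stay within \<beta> of V0 (the shell cannot be
  crossed in one step) and are joined in L to a point r-close to that component.\<close>

definition tracked :: "'b set \<Rightarrow> 'a \<Rightarrow> 'a \<Rightarrow> bool" where
  "tracked V0 u0 y \<longleftrightarrow> (if y \<in> U then y \<in> r_component (G V0) \<rho> u0
     else f y \<in> nbhd V0 \<beta> \<and>
       (\<exists>u\<in>r_component (G V0) \<rho> u0. \<exists>q. dist u q \<le> r \<and> r_joined L r q y))"

lemma tracked_nbhd:
  assumes "V0 \<in> \<V>" "tracked V0 u0 y"
  shows "f y \<in> nbhd V0 \<beta>"
proof (cases "y \<in> U")
  case True
  then have "f y \<in> V0"
    using assms G_sub by (auto simp: tracked_def r_component_iff)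
  then show ?thesis
    using w_pos w_le_\<beta> by (simp add: nbhd_self)
qed (use assms in \<open>simp add: tracked_def\<close>)

lemma tracked_near:
  assumes "tracked V0 u0 y"
  shows "\<exists>u\<in>r_component (G V0) \<rho> u0. dist u y \<le> B + r"
proof (cases "y \<in> U")
  case True
  then show ?thesis
    using assms nonneg by (auto simp: tracked_def intro!: bexI [of _ y])
next
  case False
  with assms obtain u q where "u \<in> r_component (G V0) \<rho> u0" "dist u q \<le> r" "r_joined L r q y"
    by (auto simp: tracked_def)
  moreover have "dist q y \<le> B"
    using r_joined_dist_le [OF L_bounded \<open>r_joined L r q y\<close>] .
  ultimately show ?thesis
    by (smt (verit) dist_triangle)
qed

lemma tracked_step_nbhd:
  assumes "V0 \<in> \<V>" "tracked V0 u0 p" "dist p q \<le> r"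
  shows "f q \<in> nbhd V0 (\<beta> + w)"
proof -
  have "dist (f q) (f p) \<le> w"
    using uniform [of q p] assms(3) cr_less_w by (simp add: dist_commute)
  then show ?thesis
    using nbhd_triangle [OF tracked_nbhd [OF assms(1,2)]] by blast
qed

lemma tracked_step_piece:
  assumes V0: "V0 \<in> \<V>" and "tracked V0 u0 p" "dist p q \<le> r" "V \<in> \<V>" "q \<in> G V"
  shows "q \<in> r_component (G V0) \<rho> u0"
proof -
  have "f q \<in> nbhd V w"
    using G_sub assms(4,5) w_pos by (blast intro: nbhd_self)
  moreover have "w + (\<beta> + w) \<le> S"
    using S_ge w_le_\<beta> w_pos by argo
  ultimately have "V = V0"
    using r_disjoint_nbhd_eq [OF \<V>_disjoint assms(4) V0 _ tracked_step_nbhd [OF assms(1-3)]] by blast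
  obtain u where "u \<in> r_component (G V0) \<rho> u0" "dist u p \<le> B + r"
    using tracked_near [OF assms(2)] by blast
  moreover have "dist u q \<le> \<rho>"
    using calculation(2) assms(3) \<rho>_ge dist_triangle [of u q p] by argo
  ultimately show ?thesis
    using r_component_extend assms(5) \<open>V = V0\<close> by blast
qed

lemma tracked_step:
  assumes V0: "V0 \<in> \<V>" and "tracked V0 u0 p" "q \<in> merged" "dist p q \<le> r"
  shows "tracked V0 u0 q"
proof (cases "q \<in> U")
  case True
  then show ?thesis
    using tracked_step_piece [OF assms(1,2,4)] by (auto simp: tracked_def)
next
  case False
  then have "q \<in> L" "q \<notin> shell f \<V> \<beta> (\<beta> + w)"
    using assms(3) by auto
  then have "f q \<in> nbhd V0 \<beta>"
    using tracked_step_nbhd [OF assms(1,2,4)] V0 by (auto simp: shell_def)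
  moreover have "\<exists>u\<in>r_component (G V0) \<rho> u0. \<exists>q'. dist u q' \<le> r \<and> r_joined L r q' q"
  proof (cases "p \<in> U")
    case True
    then show ?thesis
      using assms \<open>q \<in> L\<close> by (auto simp: tracked_def intro: r_joined_refl)
  next
    case False
    then show ?thesis
      using assms \<open>q \<in> L\<close> by (auto simp: tracked_def intro: r_joined_snoc)
  qed
  ultimately show ?thesis
    using False by (simp add: tracked_def)
qed

lemma near_piece:
  assumes "V0 \<in> \<V>" "u0 \<in> G V0" "r_joined merged r u0 y"
  shows "\<exists>u\<in>r_component (G V0) \<rho> u0. dist y u \<le> B + r"
proof -
  have "tracked V0 u0 y"
    using assms(3)
  proof (induction rule: r_joined_induct)
    case base
    show ?case
      using assms(1,2) by (auto simp: tracked_def r_component_self)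
  qed (rule tracked_step [OF assms(1)])
  then show ?thesis
    using tracked_near by (metis dist_commute)
qed

lemma dist_le_in_component_avoiding_U:
  assumes "C \<in> r_components merged r" "C \<inter> U = {}" "p \<in> C" "q \<in> C"
  shows "dist p q \<le> B"
proof -
  obtain x0 where x0: "C = r_component merged r x0"
    using assms(1) by (auto simp: r_components_def)
  then have p: "p \<in> r_component merged r x0"
    using assms(3) by simp
  then have "p \<in> merged"
    by (simp add: r_component_iff)
  then have "r_component merged r p = C"
    using r_component_eq [OF r_component_self p] x0 by simp
  then have "r_component merged r p \<subseteq> L"
    using assms(2) x0 by (auto simp: r_component_iff)
  moreover have "r_joined merged r p q"
    using assms(3,4) x0 r_component_joined by blast
  ultimately show ?thesis
    using r_joined_dist_le [OF L_bounded] r_joined_within_component by blast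
qed

text \<open>An r-component of the merged set either avoids U, and then lies in an r-component of L, or
  meets a piece G V0; in the latter case it cannot cross the shell around V0, so it stays within
  B + r of a single \<rho>-component of G V0.\<close>

theorem r_components_merged_bounded:
  "\<forall>C\<in>r_components merged r. R_bounded C (D + 2 * B + 2 * r)"
proof
  fix C
  assume C: "C \<in> r_components merged r"
  show "R_bounded C (D + 2 * B + 2 * r)"
  proof (cases "C \<inter> U = {}")
    case True
    moreover have "B \<le> D + 2 * B + 2 * r"
      using nonneg by argo
    ultimately show ?thesis
      unfolding R_bounded_def using dist_le_in_component_avoiding_U [OF C] by (meson order_trans)
  next
    case False
    then obtain u0 V0 where u0: "u0 \<in> C" "u0 \<in> G V0" and V0: "V0 \<in> \<V>"
      by blast
    obtain x0 where x0: "C = r_component merged r x0"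
      using C by (auto simp: r_components_def)
    have near: "\<exists>u\<in>r_component (G V0) \<rho> u0. dist y u \<le> B + r" if "y \<in> C" for y
      using near_piece [OF V0 u0(2)] r_component_joined u0(1) that x0 by blast
    have K: "R_bounded (r_component (G V0) \<rho> u0) D"
      using G_bounded [OF V0] u0(2) by (auto simp: r_components_def)
    show ?thesis
      unfolding R_bounded_def
    proof (intro ballI)
      fix y z
      assume "y \<in> C" "z \<in> C"
      then obtain u u' where "u \<in> r_component (G V0) \<rho> u0" "dist y u \<le> B + r"
        and "u' \<in> r_component (G V0) \<rho> u0" "dist z u' \<le> B + r"
        using near by blast
      moreover from calculation have "dist u u' \<le> D"
        using K by (auto simp: R_bounded_def)
      ultimately show "dist y z \<le> D + 2 * B + 2 * r"
        using dist_triangle [of y z u] dist_triangle [of u z u'] dist_commute [of z u'] by argo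
    qed
  qed
qed

end

section \<open>Colour classes\<close>

text \<open>The radii (c + 1) w and (c + 2) w make the shells of distinct colours disjoint, so a point
  loses at most one colour per stage.\<close>

primrec colour_set ::
  "('a \<Rightarrow> 'b::metric_space) \<Rightarrow> (nat \<Rightarrow> 'b set set) \<Rightarrow> (nat \<Rightarrow> 'b set \<Rightarrow> nat \<Rightarrow> 'a set) \<Rightarrow> real \<Rightarrow>
    nat \<Rightarrow> nat \<Rightarrow> 'a set" where
  "colour_set f \<V> P w 0 c = {}"
| "colour_set f \<V> P w (Suc s) c = (\<Union>V\<in>\<V> s. P s V c) \<union>
     (colour_set f \<V> P w s c - shell f (\<V> s) ((real c + 1) * w) ((real c + 1) * w + w))"

lemma colour_set_components_bounded:
  assumes uniform: "\<And>x x'. dist x x' \<le> r \<Longrightarrow> dist (f x) (f x') \<le> cr"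
    and "cr < w" "0 \<le> r"
    and disjoint: "\<And>s. s < N \<Longrightarrow> r_disjoint (\<V> s) (2 * (real k + 1) * w)"
    and P_sub: "\<And>s V c. s < N \<Longrightarrow> V \<in> \<V> s \<Longrightarrow> c < k \<Longrightarrow> f ` P s V c \<subseteq> V"
    and P_bounded: "\<And>s V c. s < N \<Longrightarrow> V \<in> \<V> s \<Longrightarrow> c < k \<Longrightarrow>
      \<forall>C\<in>r_components (P s V c) (B s + 2 * r). R_bounded C (E s)"
    and B_Suc: "\<And>s. B (Suc s) = E s + 2 * B s + 2 * r"
    and nonneg: "\<And>s. 0 \<le> B s" "\<And>s. 0 \<le> E s"
    and "s \<le> N" "c < k"
  shows "\<forall>C\<in>r_components (colour_set f \<V> P w s c) r. R_bounded C (B s)"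
  using \<open>s \<le> N\<close>
proof (induction s)
  case 0
  then show ?case
    by (simp add: r_components_def)
next
  case (Suc s)
  have "0 < w"
    using uniform [of undefined undefined] assms(2,3) by simp
  then have "(real c + 2) * w \<le> (real k + 1) * w"
    using \<open>c < k\<close> by (intro mult_right_mono) auto
  then have "2 * ((real c + 1) * w + w) \<le> 2 * (real k + 1) * w"
    by (simp add: algebra_simps)
  moreover have "w \<le> (real c + 1) * w"
    using \<open>0 < w\<close> by simp
  ultimately interpret shell_step f "\<V> s" "\<lambda>V. P s V c" "colour_set f \<V> P w s c" r cr w
    "(real c + 1) * w" "2 * (real k + 1) * w" "B s + 2 * r" "B s" "E s"
    using Suc assms by unfold_locales auto
  show ?case
    using r_components_merged_bounded B_Suc by (simp add: add.commute)
qed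

lemma colour_shells_disjoint:
  assumes "r_disjoint \<V> (2 * (real k + 1) * w)" "0 < w" "c < c'" "c' < k"
  shows "shell f \<V> ((real c + 1) * w) ((real c + 1) * w + w) \<inter>
    shell f \<V> ((real c' + 1) * w) ((real c' + 1) * w + w) = {}"
proof (rule shells_disjoint [OF assms(1)])
  have "real c + 2 \<le> real c' + 1" "real c + real c' + 4 \<le> 2 * real k + 2"
    using assms(3,4) by simp_all
  then have "(real c + 2) * w \<le> (real c' + 1) * w"
    and "(real c + real c' + 4) * w \<le> (2 * real k + 2) * w"
    using assms(2) by (simp_all add: mult_right_mono)
  then show "(real c + 1) * w + w \<le> (real c' + 1) * w"
    and "(real c + 1) * w + w + ((real c' + 1) * w + w) \<le> 2 * (real k + 1) * w"
    by (simp_all add: algebra_simps)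
qed

lemma card_colour_shells_le_1:
  assumes "r_disjoint \<V> (2 * (real k + 1) * w)" "0 < w"
  shows "card {c. c < k \<and> x \<in> shell f \<V> ((real c + 1) * w) ((real c + 1) * w + w)} \<le> 1"
proof -
  have "c = c'" if "c < k" "c' < k"
    "x \<in> shell f \<V> ((real c + 1) * w) ((real c + 1) * w + w)"
    "x \<in> shell f \<V> ((real c' + 1) * w) ((real c' + 1) * w + w)" for c c'
  proof (rule ccontr)
    assume "c \<noteq> c'"
    then consider "c < c'" | "c' < c"
      by (rule linorder_neqE_nat)
    then show False
    proof cases
      case 1
      show False
        using colour_shells_disjoint [OF assms 1 that(2)] IntI [OF that(3,4)] by (metis empty_iff)
    next
      case 2
      show False
        using colour_shells_disjoint [OF assms 2 that(1)] IntI [OF that(4,3)] by (metis empty_iff)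
    qed
  qed
  then show ?thesis
    unfolding One_nat_def by (subst card_le_Suc0_iff_eq) auto
qed

lemma card_colours_lower_bound:
  fixes Col New Sh :: "nat \<Rightarrow> nat \<Rightarrow> 'a set"
  assumes Col_Suc: "\<And>s c. Col (Suc s) c = New s c \<union> (Col s c - Sh s c)"
    and New: "N \<le> card {c. c < k \<and> x \<in> New i c}"
    and Sh: "\<And>s'. s' < s \<Longrightarrow> card {c. c < k \<and> x \<in> Sh s' c} \<le> 1"
    and "i < s"
  shows "N + i + 1 \<le> card {c. c < k \<and> x \<in> Col s c} + s"
  using Sh \<open>i < s\<close>
proof (induction s)
  case 0
  then show ?case
    by simp
next
  case (Suc s)
  let ?colours = "\<lambda>X. {c. c < k \<and> x \<in> X c}"
  have fin: "finite (?colours X)" for X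
    by simp
  show ?case
  proof (cases "i = s")
    case True
    have "?colours (New i) \<subseteq> ?colours (Col (Suc s))"
      using Col_Suc True by auto
    then have "N \<le> card (?colours (Col (Suc s)))"
      using New card_mono [OF fin] by (meson order_trans)
    then show ?thesis
      using True by simp
  next
    case False
    then have IH: "N + i + 1 \<le> card (?colours (Col s)) + s"
      using Suc by simp
    have "?colours (Col s) \<subseteq> ?colours (Col (Suc s)) \<union> ?colours (Sh s)"
      using Col_Suc by auto
    then have "card (?colours (Col s)) \<le> card (?colours (Col (Suc s)) \<union> ?colours (Sh s))"
      by (simp add: card_mono)
    also have "\<dots> \<le> card (?colours (Col (Suc s))) + card (?colours (Sh s))"
      by (rule card_Un_le)
    finally show ?thesis
      using IH Suc.prems(1) [of s] by simp
  qed
qed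

lemma colour_set_covers:
  assumes disjoint: "\<And>s. s < N \<Longrightarrow> r_disjoint (\<V> s) (2 * (real k + 1) * w)" and "0 < w"
    and P_mult: "\<And>s V. s < N \<Longrightarrow> V \<in> \<V> s \<Longrightarrow> f x \<in> V \<Longrightarrow> N \<le> card {c. c < k \<and> x \<in> P s V c}"
    and "f x \<in> (\<Union>s<N. \<Union>(\<V> s))"
  shows "\<exists>c<k. x \<in> colour_set f \<V> P w N c"
proof -
  obtain i V where i: "i < N" "V \<in> \<V> i" "f x \<in> V"
    using assms(4) by blast
  have "{c. c < k \<and> x \<in> P i V c} \<subseteq> {c. c < k \<and> x \<in> (\<Union>V\<in>\<V> i. P i V c)}"
    using i by blast
  then have "card {c. c < k \<and> x \<in> P i V c} \<le> card {c. c < k \<and> x \<in> (\<Union>V\<in>\<V> i. P i V c)}"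
    by (intro card_mono) simp_all
  then have New: "N \<le> card {c. c < k \<and> x \<in> (\<Union>V\<in>\<V> i. P i V c)}"
    using P_mult [OF i] by (meson order_trans)
  have Sh: "card {c. c < k \<and> x \<in> shell f (\<V> s) ((real c + 1) * w) ((real c + 1) * w + w)} \<le> 1"
    if "s < N" for s
    using card_colour_shells_le_1 [OF disjoint [OF that] \<open>0 < w\<close>] .
  have "N + i + 1 \<le> card {c. c < k \<and> x \<in> colour_set f \<V> P w N c} + N"
    using card_colours_lower_bound [where Col = "colour_set f \<V> P w" and New = "\<lambda>s c. \<Union>V\<in>\<V> s. P s V c"
        and Sh = "\<lambda>s c. shell f (\<V> s) ((real c + 1) * w) ((real c + 1) * w + w)",
        OF colour_set.simps(2) New Sh \<open>i < N\<close>] .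
  then have "{c. c < k \<and> x \<in> colour_set f \<V> P w N c} \<noteq> {}"
    by (intro notI) simp
  then show ?thesis
    by blast
qed

section \<open>Control functions of X\<close>

lemma r_components_cover:
  fixes Col :: "nat \<Rightarrow> 'a::metric_space set"
  assumes "\<And>c. c < Suc N \<Longrightarrow> \<forall>C\<in>r_components (Col c) r. R_bounded C E"
    and "\<And>c. Col c \<subseteq> X" "X \<subseteq> (\<Union>c<Suc N. Col c)"
  shows "\<exists>\<U> :: nat \<Rightarrow> 'a set set. (\<forall>i<Suc N. r_disjoint (\<U> i) r \<and> (\<forall>U\<in>\<U> i. U \<subseteq> X \<and> R_bounded U E))
    \<and> X \<subseteq> (\<Union>i<Suc N. \<Union>(\<U> i))"
proof (intro exI [of _ "\<lambda>c. r_components (Col c) r"] conjI allI impI ballI subsetI)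
  fix x
  assume "x \<in> X"
  then obtain c where "c < Suc N" "x \<in> Col c"
    using assms(3) by blast
  then show "x \<in> (\<Union>i<Suc N. \<Union>(r_components (Col i) r))"
    by (auto simp: r_components_def intro: r_component_self)
qed (use assms(1,2) r_disjoint_r_components in
    \<open>auto simp: r_components_def r_component_iff intro: assms(2) [THEN subsetD]\<close>)

text \<open>The separation scale at which the families of Y are taken: it leaves room for k + 1 shells
  of width c r + r, each wider than the image of an r-step.\<close>

definition separation :: "(real \<Rightarrow> real) \<Rightarrow> nat \<Rightarrow> real \<Rightarrow> real" where
  "separation c k r = 2 * (real k + 1) * (c r + r)"

text \<open>The bound on the r-components of each colour after s stages. The second argument of D is
  the diameter bound for the images of the pieces; adding the separation keeps it positive.\<close>

primrec stage_bound ::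
  "(real \<Rightarrow> real) \<Rightarrow> (real \<Rightarrow> real) \<Rightarrow> (real \<Rightarrow> real \<Rightarrow> real) \<Rightarrow> nat \<Rightarrow> nat \<Rightarrow> real \<Rightarrow> real" where
  "stage_bound c D_Y D k 0 r = 0"
| "stage_bound c D_Y D k (Suc s) r =
     D (stage_bound c D_Y D k s r + 2 * r) (D_Y (separation c k r) + separation c k r)
     + 2 * stage_bound c D_Y D k s r + 2 * r"

lemma separation_pos: "0 \<le> c r \<Longrightarrow> 0 < r \<Longrightarrow> 0 < separation c k r"
  by (simp add: separation_def)

lemma stage_bound_Suc_ge:
  assumes "\<forall>r>0. 0 \<le> c r" "\<forall>r>0. 0 \<le> D_Y r" "\<forall>r>0. \<forall>R>0. 0 \<le> D r R"
    and "0 < r" "0 \<le> stage_bound c D_Y D k s r"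
  shows "2 * stage_bound c D_Y D k s r + 2 * r \<le> stage_bound c D_Y D k (Suc s) r"
proof -
  have "0 < separation c k r"
    using assms(1,4) by (simp add: separation_pos)
  then have "0 < D_Y (separation c k r) + separation c k r"
    using assms(2) by (simp add: add_nonneg_pos)
  moreover have "0 < stage_bound c D_Y D k s r + 2 * r"
    using assms(4,5) by simp
  ultimately show ?thesis
    using assms(3) by simp
qed

lemma stage_bound_nonneg:
  assumes "\<forall>r>0. 0 \<le> c r" "\<forall>r>0. 0 \<le> D_Y r" "\<forall>r>0. \<forall>R>0. 0 \<le> D r R" "0 < r"
  shows "0 \<le> stage_bound c D_Y D k s r"
proof (induction s)
  case (Suc s)
  then show ?case
    using stage_bound_Suc_ge [OF assms Suc] assms(4) by simp
qed simp

definition piece_decomposition ::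
  "'a::metric_space set \<Rightarrow> nat \<Rightarrow> nat \<Rightarrow> real \<Rightarrow> real \<Rightarrow> (nat \<Rightarrow> 'a set) \<Rightarrow> bool" where
  "piece_decomposition A m k r E P \<longleftrightarrow> A = (\<Union>c<k. P c) \<and>
     (\<forall>c<k. \<forall>C\<in>r_components (P c) r. R_bounded C E) \<and>
     (\<forall>x\<in>A. k - m \<le> card {c. c < k \<and> x \<in> P c})"

lemma map_control_function_decompositions:
  assumes D: "map_control_function f m k D" and "\<And>s. 0 < \<rho> s" "0 < R"
    and bounded: "\<And>s V. s < N \<Longrightarrow> V \<in> \<V> s \<Longrightarrow> R_bounded V R"
  shows "\<exists>P. \<forall>s V. s < N \<longrightarrow> V \<in> \<V> s \<longrightarrow> piece_decomposition (f -` V) m k (\<rho> s) (D (\<rho> s) R) (P s V)"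
proof -
  have "\<forall>s V. \<exists>Ps. s < N \<longrightarrow> V \<in> \<V> s \<longrightarrow>
      piece_decomposition (f -` V) m k (\<rho> s) (D (\<rho> s) R) Ps"
  proof (intro allI)
    fix s V
    show "\<exists>Ps. s < N \<longrightarrow> V \<in> \<V> s \<longrightarrow> piece_decomposition (f -` V) m k (\<rho> s) (D (\<rho> s) R) Ps"
    proof (cases "s < N \<and> V \<in> \<V> s")
      case True
      then have "R_bounded (f ` f -` V) R"
        using bounded unfolding R_bounded_def by blast
      then have "\<exists>Ps. piece_decomposition (f -` V) m k (\<rho> s) (D (\<rho> s) R) Ps"
        unfolding piece_decomposition_def
        by (rule D [unfolded map_control_function_def, THEN conjunct2, rule_format, OF assms(2,3)])
      then show ?thesis
        by blast
    qed simp
  qed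
  then show ?thesis
    unfolding choice_iff .
qed

lemma colour_cover_at_scale:
  fixes f :: "'a::metric_space \<Rightarrow> 'b::metric_space"
  assumes k: "k = m + n + 1" and r: "0 < r" and uniform: "\<And>x x'. dist x x' \<le> r \<Longrightarrow> dist (f x) (f x') \<le> cr"
    and \<V>: "\<forall>s<Suc n. r_disjoint (\<V> s) (2 * (real k + 1) * (cr + r))" "UNIV \<subseteq> (\<Union>s<Suc n. \<Union>(\<V> s))"
    and P: "\<forall>s V. s < Suc n \<longrightarrow> V \<in> \<V> s \<longrightarrow> piece_decomposition (f -` V) m k (B s + 2 * r) (E s) (P s V)"
    and B_Suc: "\<And>s. B (Suc s) = E s + 2 * B s + 2 * r"
    and nonneg: "\<And>s. 0 \<le> B s" "\<And>s. 0 \<le> E s"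
  shows "\<exists>\<U> :: nat \<Rightarrow> 'a set set. (\<forall>i<Suc (m + n). r_disjoint (\<U> i) r \<and>
      (\<forall>U\<in>\<U> i. U \<subseteq> UNIV \<and> R_bounded U (B (Suc n)))) \<and> UNIV \<subseteq> (\<Union>i<Suc (m + n). \<Union>(\<U> i))"
proof -
  have "0 \<le> cr"
    using uniform [of undefined undefined] r by simp
  define Col where "Col = colour_set f \<V> P (cr + r) (Suc n)"
  have "\<forall>C\<in>r_components (Col i) r. R_bounded C (B (Suc n))" if "i < k" for i
    unfolding Col_def
  proof (rule colour_set_components_bounded [where B = B and E = E, OF uniform _ _ _ _ _ B_Suc nonneg
        order_refl \<open>i < k\<close>])
    fix s V c
    assume "s < Suc n" "V \<in> \<V> s" "c < k"
    then have "f -` V = (\<Union>c<k. P s V c)" "\<forall>C\<in>r_components (P s V c) (B s + 2 * r). R_bounded C (E s)"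
      using P [rule_format, of s V] unfolding piece_decomposition_def by blast+
    then show "f ` P s V c \<subseteq> V" "\<forall>C\<in>r_components (P s V c) (B s + 2 * r). R_bounded C (E s)"
      using \<open>c < k\<close> by blast+
  qed (use r \<V> in simp_all)
  moreover have "\<exists>i<k. x \<in> Col i" for x
    unfolding Col_def
  proof (rule colour_set_covers)
    show "Suc n \<le> card {i. i < k \<and> x \<in> P s V i}" if "s < Suc n" "V \<in> \<V> s" "f x \<in> V" for s V
    proof -
      have "\<forall>y\<in>f -` V. k - m \<le> card {i. i < k \<and> y \<in> P s V i}"
        using P [rule_format, OF that(1,2)] unfolding piece_decomposition_def by blast
      then show ?thesis
        using that(3) k by simp
    qed
    show "f x \<in> (\<Union>s<Suc n. \<Union>(\<V> s))"
      using \<V>(2) by blast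
  qed (use r \<V> \<open>0 \<le> cr\<close> in simp_all)
  then have "UNIV \<subseteq> (\<Union>i<Suc (m + n). Col i)"
    using k by auto
  ultimately show ?thesis
    using r_components_cover [of "m + n" Col r "B (Suc n)" UNIV] k by auto
qed

lemma stage_bound_cover:
  fixes f :: "'a::metric_space \<Rightarrow> 'b::metric_space" and \<V> :: "nat \<Rightarrow> 'b set set"
  assumes k: "k = m + n + 1" and c: "large_scale_uniform f c" and D: "map_control_function f m k D"
    and D_Y: "\<forall>r>0. 0 \<le> D_Y r" and r: "0 < r"
    and \<V>: "\<forall>s<Suc n. r_disjoint (\<V> s) (separation c k r) \<and>
      (\<forall>V\<in>\<V> s. V \<subseteq> UNIV \<and> R_bounded V (D_Y (separation c k r)))"
    and \<V>_cover: "UNIV \<subseteq> (\<Union>s<Suc n. \<Union>(\<V> s))"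
  shows "\<exists>\<U> :: nat \<Rightarrow> 'a set set. (\<forall>i<Suc (m + n). r_disjoint (\<U> i) r \<and>
      (\<forall>U\<in>\<U> i. U \<subseteq> UNIV \<and> R_bounded U (stage_bound c D_Y D k (Suc n) r))) \<and>
      UNIV \<subseteq> (\<Union>i<Suc (m + n). \<Union>(\<U> i))"
proof -
  have pos: "\<forall>r>0. 0 \<le> c r" "\<forall>r>0. \<forall>R>0. 0 \<le> D r R"
    using c D by (simp_all add: large_scale_uniform_def map_control_function_def)
  define S where "S = separation c k r"
  define B where "B s = stage_bound c D_Y D k s r" for s
  have "0 < S"
    using separation_pos pos(1) r by (simp add: S_def)
  then have R: "0 < D_Y S + S"
    using D_Y by (simp add: add_nonneg_pos)
  have B_nonneg: "0 \<le> B s" for s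
    using stage_bound_nonneg [OF pos(1) D_Y pos(2) r] by (simp add: B_def)
  have "R_bounded V (D_Y S + S)" if "s < Suc n" "V \<in> \<V> s" for s V
    using \<V> that \<open>0 < S\<close> unfolding R_bounded_def S_def by fastforce
  moreover have "0 < B s + 2 * r" for s
    using B_nonneg r by (simp add: add_nonneg_pos)
  ultimately obtain P where P: "\<forall>s V. s < Suc n \<longrightarrow> V \<in> \<V> s \<longrightarrow>
      piece_decomposition (f -` V) m k (B s + 2 * r) (D (B s + 2 * r) (D_Y S + S)) (P s V)"
    using map_control_function_decompositions [where \<rho> = "\<lambda>s. B s + 2 * r", OF D _ R] by blast
  have uniform: "dist (f x) (f x') \<le> c r" if "dist x x' \<le> r" for x x'
    using c r that by (simp add: large_scale_uniform_def)
  have \<V>_disjoint: "\<forall>s<Suc n. r_disjoint (\<V> s) (2 * (real k + 1) * (c r + r))"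
    using \<V> by (simp add: separation_def)
  have E_nonneg: "0 \<le> D (B s + 2 * r) (D_Y S + S)" for s
    using pos(2) B_nonneg [of s] r R by (simp add: add_nonneg_pos)
  have B_Suc: "B (Suc s) = D (B s + 2 * r) (D_Y S + S) + 2 * B s + 2 * r" for s
    by (simp add: B_def S_def)
  show ?thesis
    using colour_cover_at_scale [OF k r uniform \<V>_disjoint \<V>_cover P B_Suc B_nonneg E_nonneg]
    unfolding B_def .
qed

theorem dim_control_function_of_map:
  fixes f :: "'a::metric_space \<Rightarrow> 'b::metric_space"
  assumes k: "k = m + n + 1" and c: "large_scale_uniform f c"
    and D_Y: "dim_control_function (UNIV :: 'b set) n D_Y" and D: "map_control_function f m k D"
  shows "dim_control_function (UNIV :: 'a set) (m + n) (stage_bound c D_Y D k (Suc n))"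
  unfolding dim_control_function_def
proof (intro conjI allI impI)
  have pos: "\<forall>r>0. 0 \<le> c r" "\<forall>r>0. 0 \<le> D_Y r" "\<forall>r>0. \<forall>R>0. 0 \<le> D r R"
    using c D_Y D by (simp_all add: large_scale_uniform_def dim_control_function_def map_control_function_def)
  fix r :: real
  assume r: "0 < r"
  show "0 \<le> stage_bound c D_Y D k (Suc n) r"
    using stage_bound_nonneg [OF pos r] .
  have S: "0 < separation c k r"
    using separation_pos pos(1) r by simp
  obtain \<V> :: "nat \<Rightarrow> 'b set set"
    where "\<forall>s<Suc n. r_disjoint (\<V> s) (separation c k r) \<and>
        (\<forall>V\<in>\<V> s. V \<subseteq> UNIV \<and> R_bounded V (D_Y (separation c k r)))"
      and "UNIV \<subseteq> (\<Union>s<Suc n. \<Union>(\<V> s))"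
    using D_Y [unfolded dim_control_function_def, THEN conjunct2, rule_format, OF S] by blast
  then show "\<exists>\<U> :: nat \<Rightarrow> 'a set set. (\<forall>i<Suc (m + n). r_disjoint (\<U> i) r \<and>
      (\<forall>U\<in>\<U> i. U \<subseteq> UNIV \<and> R_bounded U (stage_bound c D_Y D k (Suc n) r))) \<and>
      UNIV \<subseteq> (\<Union>i<Suc (m + n). \<Union>(\<U> i))"
    by (rule stage_bound_cover [OF k c D pos(2) r])
qed

section \<open>Linear and dilation control functions\<close>

text \<open>Nonnegative affine functions of r > 0 (of r, R > 0 in the two-variable case); the flag
  hom = True forces the constant term to vanish.\<close>

definition nonneg_affine :: "bool \<Rightarrow> (real \<Rightarrow> real) \<Rightarrow> bool" where
  "nonneg_affine hom g \<longleftrightarrow> (\<exists>a b. 0 \<le> a \<and> 0 \<le> b \<and> (hom \<longrightarrow> b = 0) \<and> (\<forall>r>0. g r = a * r + b))"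

definition nonneg_affine2 :: "bool \<Rightarrow> (real \<Rightarrow> real \<Rightarrow> real) \<Rightarrow> bool" where
  "nonneg_affine2 hom D \<longleftrightarrow> (\<exists>a b c. 0 \<le> a \<and> 0 \<le> b \<and> 0 \<le> c \<and> (hom \<longrightarrow> c = 0) \<and>
     (\<forall>r>0. \<forall>R>0. D r R = a * r + b * R + c))"

lemma linear_fun1_iff_nonneg_affine: "linear_fun1 g \<longleftrightarrow> nonneg_affine False g"
  unfolding linear_fun1_def nonneg_affine_def by blast

lemma linear_fun2_iff_nonneg_affine2: "linear_fun2 D \<longleftrightarrow> nonneg_affine2 False D"
  unfolding linear_fun2_def nonneg_affine2_def by blast

lemma dilation_fun2_iff_nonneg_affine2: "dilation_fun2 D \<longleftrightarrow> nonneg_affine2 True D"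
  unfolding dilation_fun2_def nonneg_affine2_def by force

lemma dilation_fun1_imp_nonneg_affine: "dilation_fun1 g \<Longrightarrow> nonneg_affine True g"
  unfolding dilation_fun1_def nonneg_affine_def by (metis add.right_neutral less_eq_real_def)

lemma dilation_fun1I:
  assumes "nonneg_affine True g" "\<And>r. 0 < r \<Longrightarrow> r \<le> g r"
  shows "dilation_fun1 g"
proof -
  obtain a where "\<forall>r>0. g r = a * r"
    using assms(1) unfolding nonneg_affine_def by force
  moreover from this have "1 \<le> a"
    using assms(2) [of 1] by simp
  ultimately show ?thesis
    unfolding dilation_fun1_def by (intro exI [of _ a]) simp
qed

lemma nonneg_affine_nonneg: "nonneg_affine h g \<Longrightarrow> 0 < r \<Longrightarrow> 0 \<le> g r"
  unfolding nonneg_affine_def by force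

lemma nonneg_affine2_nonneg: "nonneg_affine2 h D \<Longrightarrow> 0 < r \<Longrightarrow> 0 < R \<Longrightarrow> 0 \<le> D r R"
  unfolding nonneg_affine2_def by force

lemma nonneg_affine_zero: "nonneg_affine h (\<lambda>r. 0)"
  unfolding nonneg_affine_def by force

lemma nonneg_affine_ident: "nonneg_affine h (\<lambda>r. r)"
  unfolding nonneg_affine_def by (intro exI [of _ 1] exI [of _ 0]) simp

lemma nonneg_affine_add:
  assumes "nonneg_affine h g" "nonneg_affine h g'"
  shows "nonneg_affine h (\<lambda>r. g r + g' r)"
proof -
  obtain a b a' b' where "0 \<le> a" "0 \<le> b" "h \<longrightarrow> b = 0" "\<forall>r>0. g r = a * r + b"
    and "0 \<le> a'" "0 \<le> b'" "h \<longrightarrow> b' = 0" "\<forall>r>0. g' r = a' * r + b'"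
    using assms unfolding nonneg_affine_def by blast
  then show ?thesis
    unfolding nonneg_affine_def by (intro exI [of _ "a + a'"] exI [of _ "b + b'"]) (simp add: algebra_simps)
qed

lemma nonneg_affine_scale:
  assumes "0 \<le> t" "nonneg_affine h g"
  shows "nonneg_affine h (\<lambda>r. t * g r)"
proof -
  obtain a b where "0 \<le> a" "0 \<le> b" "h \<longrightarrow> b = 0" "\<forall>r>0. g r = a * r + b"
    using assms(2) unfolding nonneg_affine_def by blast
  then show ?thesis
    using assms(1) unfolding nonneg_affine_def
    by (intro exI [of _ "t * a"] exI [of _ "t * b"]) (simp add: algebra_simps)
qed

lemma nonneg_affine_compose:
  assumes "nonneg_affine h g" "nonneg_affine h g'" "\<And>r. 0 < r \<Longrightarrow> 0 < g' r"
  shows "nonneg_affine h (\<lambda>r. g (g' r))"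
proof -
  obtain a b where "0 \<le> a" "0 \<le> b" "h \<longrightarrow> b = 0" "\<forall>r>0. g r = a * r + b"
    using assms(1) unfolding nonneg_affine_def by blast
  then have "nonneg_affine h (\<lambda>r. g (g' r)) \<longleftrightarrow> nonneg_affine h (\<lambda>r. a * g' r + b)"
    using assms(3) unfolding nonneg_affine_def by simp
  moreover have "nonneg_affine h (\<lambda>r. b)"
    using \<open>0 \<le> b\<close> \<open>h \<longrightarrow> b = 0\<close> unfolding nonneg_affine_def by (intro exI [of _ 0] exI [of _ b]) simp
  moreover have "nonneg_affine h (\<lambda>r. a * g' r + b)"
    using assms(2) \<open>0 \<le> a\<close> \<open>nonneg_affine h (\<lambda>r. b)\<close> by (intro nonneg_affine_add nonneg_affine_scale)
  ultimately show ?thesis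
    by simp
qed

lemma nonneg_affine2_compose:
  assumes "nonneg_affine2 h D" "nonneg_affine h g" "nonneg_affine h g'"
    and "\<And>r. 0 < r \<Longrightarrow> 0 < g r" "\<And>r. 0 < r \<Longrightarrow> 0 < g' r"
  shows "nonneg_affine h (\<lambda>r. D (g r) (g' r))"
proof -
  obtain a b c where "0 \<le> a" "0 \<le> b" "0 \<le> c" "h \<longrightarrow> c = 0" "\<forall>r>0. \<forall>R>0. D r R = a * r + b * R + c"
    using assms(1) unfolding nonneg_affine2_def by blast
  then have "nonneg_affine h (\<lambda>r. D (g r) (g' r)) \<longleftrightarrow> nonneg_affine h (\<lambda>r. a * g r + b * g' r + c)"
    using assms(4,5) unfolding nonneg_affine_def by simp
  moreover have "nonneg_affine h (\<lambda>r. c)"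
    using \<open>0 \<le> c\<close> \<open>h \<longrightarrow> c = 0\<close> unfolding nonneg_affine_def by (intro exI [of _ 0] exI [of _ c]) simp
  moreover have "nonneg_affine h (\<lambda>r. a * g r + b * g' r + c)"
    using assms(2,3) \<open>0 \<le> a\<close> \<open>0 \<le> b\<close> \<open>nonneg_affine h (\<lambda>r. c)\<close>
    by (intro nonneg_affine_add nonneg_affine_scale)
  ultimately show ?thesis
    by simp
qed

lemma separation_nonneg_affine: "nonneg_affine h c \<Longrightarrow> nonneg_affine h (separation c k)"
  unfolding separation_def
  by (intro nonneg_affine_scale [where g = "\<lambda>r. c r + r", simplified mult.assoc] nonneg_affine_add
      nonneg_affine_ident) simp_all

lemma stage_bound_nonneg_affine:
  assumes c: "nonneg_affine h c" and D_Y: "nonneg_affine h D_Y" and D: "nonneg_affine2 h D"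
  shows "nonneg_affine h (stage_bound c D_Y D k s)"
proof (induction s)
  case 0
  show ?case
    using nonneg_affine_zero by (simp add: fun_eq_iff)
next
  case (Suc s)
  have S_pos: "0 < separation c k r" if "0 < r" for r
    using separation_pos nonneg_affine_nonneg [OF c] that by blast
  have R: "nonneg_affine h (\<lambda>r. D_Y (separation c k r) + separation c k r)"
    using S_pos by (intro nonneg_affine_add nonneg_affine_compose [OF D_Y] separation_nonneg_affine c)
  have R_pos: "0 < D_Y (separation c k r) + separation c k r" if "0 < r" for r
    using nonneg_affine_nonneg [OF D_Y S_pos] S_pos that by (simp add: add_nonneg_pos)
  have \<rho>: "nonneg_affine h (\<lambda>r. stage_bound c D_Y D k s r + 2 * r)"
    using Suc by (intro nonneg_affine_add nonneg_affine_scale nonneg_affine_ident) simp_all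
  have \<rho>_pos: "0 < stage_bound c D_Y D k s r + 2 * r" if "0 < r" for r
    using nonneg_affine_nonneg [OF Suc that] that by simp
  have "nonneg_affine h (\<lambda>r. D (stage_bound c D_Y D k s r + 2 * r)
      (D_Y (separation c k r) + separation c k r))"
    by (rule nonneg_affine2_compose [OF D \<rho> R \<rho>_pos R_pos])
  then have "nonneg_affine h (\<lambda>r. D (stage_bound c D_Y D k s r + 2 * r)
      (D_Y (separation c k r) + separation c k r) + 2 * stage_bound c D_Y D k s r + 2 * r)"
    using Suc by (intro nonneg_affine_add nonneg_affine_scale nonneg_affine_ident) simp_all
  then show ?case
    by (simp add: fun_eq_iff)
qed

lemma stage_bound_linear:
  "linear_fun1 c \<Longrightarrow> linear_fun1 D_Y \<Longrightarrow> linear_fun2 D \<Longrightarrow> linear_fun1 (stage_bound c D_Y D k s)"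
  by (simp add: linear_fun1_iff_nonneg_affine linear_fun2_iff_nonneg_affine2 stage_bound_nonneg_affine)

lemma stage_bound_dilation:
  assumes "dilation_fun1 c" "dilation_fun1 D_Y" "dilation_fun2 D"
  shows "dilation_fun1 (stage_bound c D_Y D k (Suc s))"
proof (rule dilation_fun1I)
  have c: "nonneg_affine True c" and D_Y: "nonneg_affine True D_Y" and D: "nonneg_affine2 True D"
    using assms by (simp_all add: dilation_fun1_imp_nonneg_affine dilation_fun2_iff_nonneg_affine2)
  then show "nonneg_affine True (stage_bound c D_Y D k (Suc s))"
    by (rule stage_bound_nonneg_affine)
  have pos: "\<forall>r>0. 0 \<le> c r" "\<forall>r>0. 0 \<le> D_Y r" "\<forall>r>0. \<forall>R>0. 0 \<le> D r R"
    using nonneg_affine_nonneg [OF c] nonneg_affine_nonneg [OF D_Y] nonneg_affine2_nonneg [OF D] by blast+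
  show "r \<le> stage_bound c D_Y D k (Suc s) r" if "0 < r" for r
  proof -
    have "0 \<le> stage_bound c D_Y D k s r"
      using stage_bound_nonneg [OF pos that] .
    then show ?thesis
      using stage_bound_Suc_ge [OF pos that] that by fastforce
  qed
qed

theorem mainTheorem2:
  fixes f :: "'a::metric_space \<Rightarrow> 'b::metric_space"
    and c_f :: "real \<Rightarrow> real"
    and D_f :: "real \<Rightarrow> real \<Rightarrow> real"
    and m n k :: nat
  assumes "k = m + n + 1"
    and "large_scale_uniform f c_f"
    and "asdim_le (UNIV :: 'b set) n"
    and "map_control_function f m k D_f"
  shows "asdim_le (UNIV :: 'a set) (m + n)
    \<and> ((\<exists>c D_Y D. large_scale_uniform f c \<and> linear_fun1 c
          \<and> dim_control_function (UNIV :: 'b set) n D_Y \<and> linear_fun1 D_Y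
          \<and> map_control_function f m k D \<and> linear_fun2 D)
        \<longrightarrow> (\<exists>D_X. dim_control_function (UNIV :: 'a set) (k - 1) D_X \<and> linear_fun1 D_X))
    \<and> ((\<exists>c D_Y D. large_scale_uniform f c \<and> dilation_fun1 c
          \<and> dim_control_function (UNIV :: 'b set) n D_Y \<and> dilation_fun1 D_Y
          \<and> map_control_function f m k D \<and> dilation_fun2 D)
        \<longrightarrow> (\<exists>D_X. dim_control_function (UNIV :: 'a set) (k - 1) D_X \<and> dilation_fun1 D_X))"
proof (intro conjI impI)
  have km: "k - 1 = m + n"
    using assms(1) by simp
  obtain D_Y where "dim_control_function (UNIV :: 'b set) n D_Y"
    using assms(3) unfolding asdim_le_def by blast
  then show "asdim_le (UNIV :: 'a set) (m + n)"
    using dim_control_function_of_map [OF assms(1,2) _ assms(4)] unfolding asdim_le_def by blast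
  show "\<exists>D_X. dim_control_function (UNIV :: 'a set) (k - 1) D_X \<and> linear_fun1 D_X"
    if "\<exists>c D_Y D. large_scale_uniform f c \<and> linear_fun1 c
      \<and> dim_control_function (UNIV :: 'b set) n D_Y \<and> linear_fun1 D_Y
      \<and> map_control_function f m k D \<and> linear_fun2 D"
    using that dim_control_function_of_map [OF assms(1)] stage_bound_linear unfolding km by blast
  show "\<exists>D_X. dim_control_function (UNIV :: 'a set) (k - 1) D_X \<and> dilation_fun1 D_X"
    if "\<exists>c D_Y D. large_scale_uniform f c \<and> dilation_fun1 c
      \<and> dim_control_function (UNIV :: 'b set) n D_Y \<and> dilation_fun1 D_Y
      \<and> map_control_function f m k D \<and> dilation_fun2 D"
    using that dim_control_function_of_map [OF assms(1)] stage_bound_dilation unfolding km by blast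
qed

end
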